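(* Let $\Gamma$ be a totally ordered additive abelian group, let $\mathsf{M}=(E,\nu_{\mathsf{M}})$ be a valuated matroid of rank $r$ on a finite set $E$ with values in $\overline{\Gamma}$, and let $\widetilde{\nu}_{\mathsf{M}}\colon\binom{E}{\leq r}\to\overline{\Gamma}$ be given by $\widetilde{\nu}_{\mathsf{M}}(S)=\min\{\nu_{\mathsf{M}}(B)\mid B\in\binom{E}{r},\ S\subseteq B\}$. Let $Q$ be a finite set disjoint from $E$ and $\widetilde{E}=Q\sqcup E$. Define $\nu_{\widetilde{\mathsf{M}}}\colon\binom{\widetilde{E}}{r}\to\overline{\Gamma}$ by $\nu_{\widetilde{\mathsf{M}}}(\widetilde{S})=\widetilde{\nu}_{\mathsf{M}}(\widetilde{S}\cap E)$. Then $\nu_{\widetilde{\mathsf{M}}}$ is a valuated matroid of rank $r$ on $\widetilde{E}$.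
   Context: $\overline{\Gamma}=\Gamma\sqcup\{\infty\}$ with $\infty$ larger than every element of $\Gamma$. $\binom{X}{r}$ and $\binom{X}{\leq r}$ denote the sets of subsets of $X$ with exactly $r$, resp. at most $r$, elements. A valuated matroid of rank $r$ on a finite set $X$ is a map $\nu\colon\binom{X}{r}\to\overline{\Gamma}$, not identically $\infty$, such that for all $S,T\in\binom{X}{r}$ and every $s\in S- T$ there is $t\in T- S$ with $\nu(S)+\nu(T)\geq\nu(S-\{s\}\cup\{t\})+\nu(T-\{t\}\cup\{s\})$. *)

theory Defs
  imports Main
begin

datatype 'a ext = Fin 'a | Infty

instantiation ext :: (linorder) linorder
begin
fun less_eq_ext :: "'a ext \<Rightarrow> 'a ext \<Rightarrow> bool" where
  "less_eq_ext (Fin x) (Fin y) = (x \<le> y)"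
| "less_eq_ext _ Infty = True"
| "less_eq_ext Infty (Fin _) = False"
definition less_ext :: "'a ext \<Rightarrow> 'a ext \<Rightarrow> bool" where
  "less_ext x y = (x \<le> y \<and> \<not> y \<le> x)"
instance
proof
  fix x y z :: "'a ext"
  show "(x < y) = (x \<le> y \<and> \<not> y \<le> x)" by (simp add: less_ext_def)
  show "x \<le> x" by (cases x) auto
  show "x \<le> y \<Longrightarrow> y \<le> z \<Longrightarrow> x \<le> z"
    by (cases x; cases y; cases z) auto
  show "x \<le> y \<Longrightarrow> y \<le> x \<Longrightarrow> x = y"
    by (cases x; cases y) auto
  show "x \<le> y \<or> y \<le> x" by (cases x; cases y) auto
qed
end

fun eplus :: "'a::plus ext \<Rightarrow> 'a ext \<Rightarrow> 'a ext" where
  "eplus (Fin x) (Fin y) = Fin (x + y)"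
| "eplus _ _ = Infty"

text \<open>Valuated matroid of rank r on the finite set X; the map \<open>\<nu>\<close> is only
  consulted on r-element subsets of X.\<close>
definition valuated_matroid ::
  "'e set \<Rightarrow> nat \<Rightarrow> ('e set \<Rightarrow> 'a::linordered_ab_group_add ext) \<Rightarrow> bool" where
  "valuated_matroid X r \<nu> \<longleftrightarrow>
     finite X \<and>
     (\<exists>B. B \<subseteq> X \<and> card B = r \<and> \<nu> B \<noteq> Infty) \<and>
     (\<forall>S T. S \<subseteq> X \<and> card S = r \<and> T \<subseteq> X \<and> card T = r \<longrightarrow>
        (\<forall>s \<in> S - T. \<exists>t \<in> T - S.
           eplus (\<nu> (insert t (S - {s}))) (\<nu> (insert s (T - {t}))) \<le> eplus (\<nu> S) (\<nu> T)))"

definition nu_tilde ::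
  "'e set \<Rightarrow> nat \<Rightarrow> ('e set \<Rightarrow> 'a::linorder ext) \<Rightarrow> 'e set \<Rightarrow> 'a ext" where
  "nu_tilde E r \<nu> S = Min {\<nu> B | B. B \<subseteq> E \<and> card B = r \<and> S \<subseteq> B}"

end

theory Submission
  imports Defs
begin

text \<open>The points of \<open>Q\<close> can be added one at a time, since \<open>\<nu>~\<close> computed in the extended
  matroid only depends on the intersection with \<open>E\<close> and agrees with \<open>\<nu>~\<close> of \<open>M\<close>.
  For a single new point \<open>q\<close> and \<open>S, T \<subseteq> E + q\<close>, choose optimal bases \<open>B \<supseteq> S \<inter> E\<close>
  and \<open>C \<supseteq> T \<inter> E\<close>; it suffices to find \<open>t\<close> and bases covering \<open>(S - s + t) \<inter> E\<close> and
  \<open>(T - t + s) \<inter> E\<close> whose values sum to at most \<open>\<nu>(B) + \<nu>(C)\<close>. Exchanges in \<open>M\<close> move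
  the pair \<open>(B, C)\<close> towards such a pair without increasing the sum. Because \<open>B\<close> and \<open>C\<close>
  each have at most one element outside \<open>S\<close> resp. \<open>T\<close>, two exchanges suffice, together
  with one appeal to the optimality of \<open>B\<close>.\<close>

lemma eplus_mono:
  fixes a :: "'a::linordered_ab_group_add ext"
  assumes "a \<le> a'" "b \<le> b'"
  shows "eplus a b \<le> eplus a' b'"
  using assms by (cases a; cases a'; cases b; cases b') (auto intro: add_mono)

lemma eplus_le_cancel:
  fixes a :: "'a::linordered_ab_group_add ext"
  assumes "a \<le> a'" "eplus a' b' \<le> eplus a b"
  shows "eplus a b' \<le> eplus a b"
proof (cases a; cases a'; cases b; cases b')
  fix x x' y y' :: 'a
  assume "a = Fin x" "a' = Fin x'" "b = Fin y" "b' = Fin y'"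
  then have "x + y' \<le> x' + y'" "x' + y' \<le> x + y" using assms by auto
  then have "x + y' \<le> x + y" by (rule order_trans)
  then show ?thesis using \<open>a = Fin x\<close> \<open>b = Fin y\<close> \<open>b' = Fin y'\<close> by simp
qed (use assms in auto)

lemma card_insert_Diff_swap:
  assumes "finite A" "a \<in> A" "b \<notin> A"
  shows "card (insert b (A - {a})) = card A"
proof -
  have "card A > 0" using assms card_gt_0_iff by blast
  then show ?thesis using assms by simp
qed

lemma valuated_matroid_finite: "valuated_matroid X r \<nu> \<Longrightarrow> finite X"
  unfolding valuated_matroid_def by blast

lemma valuated_matroid_rank_le: "valuated_matroid X r \<nu> \<Longrightarrow> r \<le> card X"
  unfolding valuated_matroid_def by (auto intro: card_mono)

lemma valuated_matroid_exchange:
  assumes "valuated_matroid X r \<nu>" "S \<subseteq> X" "card S = r" "T \<subseteq> X" "card T = r" "s \<in> S - T"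
  obtains t where "t \<in> T - S"
    "eplus (\<nu> (insert t (S - {s}))) (\<nu> (insert s (T - {t}))) \<le> eplus (\<nu> S) (\<nu> T)"
  using assms unfolding valuated_matroid_def by blast

lemma valuated_matroid_cong:
  assumes vm: "valuated_matroid X r f" and eq: "\<And>S. S \<subseteq> X \<Longrightarrow> card S = r \<Longrightarrow> f S = g S"
  shows "valuated_matroid X r g"
proof -
  have fin: "finite X" using vm by (rule valuated_matroid_finite)
  have swap: "insert t (S - {s}) \<subseteq> X \<and> card (insert t (S - {s})) = r"
    if "S \<subseteq> X" "card S = r" "s \<in> S" "t \<in> X" "t \<notin> S" for S s t
    using that card_insert_Diff_swap[of S s t] finite_subset[OF _ fin] by auto
  show ?thesis
    unfolding valuated_matroid_def
  proof (intro conjI allI impI ballI)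
    show "finite X" by (rule fin)
    obtain B where "B \<subseteq> X" "card B = r" "f B \<noteq> Infty"
      using vm unfolding valuated_matroid_def by blast
    then show "\<exists>B\<subseteq>X. card B = r \<and> g B \<noteq> Infty" using eq by metis
  next
    fix S T s
    assume ST: "S \<subseteq> X \<and> card S = r \<and> T \<subseteq> X \<and> card T = r" and s: "s \<in> S - T"
    then obtain t where t: "t \<in> T - S"
      "eplus (f (insert t (S - {s}))) (f (insert s (T - {t}))) \<le> eplus (f S) (f T)"
      using valuated_matroid_exchange[OF vm] by blast
    then show "\<exists>t\<in>T - S. eplus (g (insert t (S - {s}))) (g (insert s (T - {t}))) \<le> eplus (g S) (g T)"
      using ST s swap[of S s t] swap[of T t s] eq by (metis DiffD1 DiffD2 subsetD)
  qed
qed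

lemma nu_tilde_le:
  assumes "finite E" "B \<subseteq> E" "card B = r" "X \<subseteq> B"
  shows "nu_tilde E r \<nu> X \<le> \<nu> B"
proof -
  have "{\<nu> B | B. B \<subseteq> E \<and> card B = r \<and> X \<subseteq> B} \<subseteq> \<nu> ` Pow E" by auto
  then show ?thesis
    unfolding nu_tilde_def using assms by (intro Min_le) (auto intro: finite_subset)
qed

lemma nu_tilde_attained:
  assumes "finite E" "X \<subseteq> E" "card X \<le> r" "r \<le> card E"
  obtains B where "B \<subseteq> E" "card B = r" "X \<subseteq> B" "\<nu> B = nu_tilde E r \<nu> X"
proof -
  let ?V = "{\<nu> B | B. B \<subseteq> E \<and> card B = r \<and> X \<subseteq> B}"
  have "?V \<subseteq> \<nu> ` Pow E" by auto
  then have "finite ?V" using assms(1) by (auto intro: finite_subset)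
  moreover have "?V \<noteq> {}" using exists_subset_between[OF assms(3,4,2,1)] by auto
  ultimately have "nu_tilde E r \<nu> X \<in> ?V" unfolding nu_tilde_def by (rule Min_in)
  then show ?thesis using that by auto
qed

lemma nu_tilde_mono:
  assumes "finite E" "X \<subseteq> Y" "Y \<subseteq> E" "card Y \<le> r" "r \<le> card E"
  shows "nu_tilde E r \<nu> X \<le> nu_tilde E r \<nu> Y"
proof -
  obtain B where "B \<subseteq> E" "card B = r" "Y \<subseteq> B" "\<nu> B = nu_tilde E r \<nu> Y"
    using nu_tilde_attained[OF assms(1,3-5)] .
  then show ?thesis using nu_tilde_le[OF assms(1)] assms(2) by (metis order_trans)
qed

lemma nu_tilde_base:
  assumes "finite E" "B \<subseteq> E" "card B = r"
  shows "nu_tilde E r \<nu> B = \<nu> B"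
proof -
  have "C = B" if "C \<subseteq> E" "card C = r" "B \<subseteq> C" for C
    using that assms by (metis card_subset_eq finite_subset)
  then have "{\<nu> C | C. C \<subseteq> E \<and> card C = r \<and> B \<subseteq> C} = {\<nu> B}" using assms by auto
  then show ?thesis unfolding nu_tilde_def by simp
qed

lemma nu_tilde_of_extension:
  assumes X: "finite X" "E \<subseteq> X" and rE: "r \<le> card E" and Y: "Y \<subseteq> X" "card Y \<le> r"
  shows "nu_tilde X r (\<lambda>A. nu_tilde E r \<nu> (A \<inter> E)) Y = nu_tilde E r \<nu> (Y \<inter> E)"
proof (rule antisym)
  have finE: "finite E" using finite_subset[OF X(2,1)] .
  have finY: "finite Y" using finite_subset[OF Y(1) X(1)] .
  have cYE: "card (Y \<inter> E) \<le> r" using card_mono[OF finY, of "Y \<inter> E"] Y(2) by simp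
  obtain B where B: "B \<subseteq> E" "card B = r" "Y \<inter> E \<subseteq> B" "\<nu> B = nu_tilde E r \<nu> (Y \<inter> E)"
    using nu_tilde_attained[OF finE _ cYE rE] by blast
  have finB: "finite B" using finite_subset[OF B(1) finE] .
  have "r \<le> card (Y \<union> B)" using B(2) card_mono[of "Y \<union> B" B] finY finB by simp
  then obtain Y' where Y': "Y \<subseteq> Y'" "Y' \<subseteq> Y \<union> B" "card Y' = r"
    using exists_subset_between[OF Y(2)] finY finB by blast
  have "Y' \<subseteq> X" using Y'(2) Y(1) X(2) B(1) by blast
  then have "nu_tilde X r (\<lambda>A. nu_tilde E r \<nu> (A \<inter> E)) Y \<le> nu_tilde E r \<nu> (Y' \<inter> E)"
    using Y'(1,3) X(1) by (intro nu_tilde_le) auto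
  also have "\<dots> \<le> \<nu> B" using Y' B by (intro nu_tilde_le[OF finE]) auto
  finally show "nu_tilde X r (\<lambda>A. nu_tilde E r \<nu> (A \<inter> E)) Y \<le> nu_tilde E r \<nu> (Y \<inter> E)"
    using B(4) by simp
next
  have rX: "r \<le> card X" using rE card_mono[OF X] by simp
  obtain Y' where Y': "Y' \<subseteq> X" "card Y' = r" "Y \<subseteq> Y'"
    "nu_tilde E r \<nu> (Y' \<inter> E) = nu_tilde X r (\<lambda>A. nu_tilde E r \<nu> (A \<inter> E)) Y"
    using nu_tilde_attained[OF X(1) Y rX, of "\<lambda>A. nu_tilde E r \<nu> (A \<inter> E)"] by blast
  have "card (Y' \<inter> E) \<le> r"
    using card_mono[OF finite_subset[OF Y'(1) X(1)], of "Y' \<inter> E"] Y'(2) by simp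
  then have "nu_tilde E r \<nu> (Y \<inter> E) \<le> nu_tilde E r \<nu> (Y' \<inter> E)"
    using Y'(3) rE finite_subset[OF X(2,1)] by (intro nu_tilde_mono) auto
  then show "nu_tilde E r \<nu> (Y \<inter> E) \<le> nu_tilde X r (\<lambda>A. nu_tilde E r \<nu> (A \<inter> E)) Y"
    using Y'(4) by simp
qed

text \<open>Invariant of the search: \<open>B\<close> and \<open>C\<close> are candidates for the bases covering
  \<open>(S - s + t) \<inter> E\<close> and \<open>(T - t + s) \<inter> E\<close> for a yet unknown \<open>t\<close>.\<close>

definition covering_pair ::
  "'e set \<Rightarrow> nat \<Rightarrow> 'e set \<Rightarrow> 'e set \<Rightarrow> 'e \<Rightarrow> 'e set \<Rightarrow> 'e set \<Rightarrow> bool" where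
  "covering_pair E r S T s B C \<longleftrightarrow>
     B \<subseteq> E \<and> card B = r \<and> C \<subseteq> E \<and> card C = r \<and>
     (S - {s}) \<inter> E \<subseteq> B \<and> T \<inter> E \<subseteq> C \<and> (s \<in> E \<longrightarrow> s \<in> B \<union> C)"

definition nu_tilde_exchange_le ::
  "'e set \<Rightarrow> nat \<Rightarrow> ('e set \<Rightarrow> 'a::linordered_ab_group_add ext) \<Rightarrow> 'e set \<Rightarrow> 'e set \<Rightarrow> 'e
     \<Rightarrow> 'a ext \<Rightarrow> bool" where
  "nu_tilde_exchange_le E r \<nu> S T s R \<longleftrightarrow>
     (\<exists>t\<in>T - S. eplus (nu_tilde E r \<nu> (insert t (S - {s}) \<inter> E))
                     (nu_tilde E r \<nu> (insert s (T - {t}) \<inter> E)) \<le> R)"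

lemma nu_tilde_exchange_le_trans:
  "nu_tilde_exchange_le E r \<nu> S T s R \<Longrightarrow> R \<le> R' \<Longrightarrow> nu_tilde_exchange_le E r \<nu> S T s R'"
  unfolding nu_tilde_exchange_le_def by (blast intro: order_trans)

lemma nu_tilde_exchange_le_cover:
  assumes "finite E" "t \<in> T - S" "B \<subseteq> E" "card B = r" "C \<subseteq> E" "card C = r"
    "insert t (S - {s}) \<inter> E \<subseteq> B" "insert s (T - {t}) \<inter> E \<subseteq> C"
  shows "nu_tilde_exchange_le E r \<nu> S T s (eplus (\<nu> B) (\<nu> C))"
  unfolding nu_tilde_exchange_le_def using assms by (blast intro: eplus_mono nu_tilde_le)

lemma covering_pair_stay:
  assumes "finite E" "covering_pair E r S T s B C" "t \<in> T - S"
    "t \<in> E \<Longrightarrow> t \<in> B" "s \<in> E \<Longrightarrow> s \<in> C"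
  shows "nu_tilde_exchange_le E r \<nu> S T s (eplus (\<nu> B) (\<nu> C))"
  using assms(2-) unfolding covering_pair_def by (intro nu_tilde_exchange_le_cover[OF assms(1)]) auto

context
  fixes E :: "'e set" and r :: nat and \<nu> :: "'e set \<Rightarrow> 'a::linordered_ab_group_add ext"
    and S T :: "'e set" and s :: 'e
  assumes vm: "valuated_matroid E r \<nu>"
    and s: "s \<in> S - T" and fin: "finite S" "finite T" and card_eq: "card S = card T"
begin

lemma covering_pair_swap:
  assumes BC: "covering_pair E r S T s B C"
    and e: "e \<in> B - C" "e \<notin> S - {s}" "s \<in> E \<Longrightarrow> s \<in> C \<or> s = e"
  obtains "nu_tilde_exchange_le E r \<nu> S T s (eplus (\<nu> B) (\<nu> C))"
  | c where "c \<in> C - B" "c \<notin> T"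
      "eplus (\<nu> (insert c (B - {e}))) (\<nu> (insert e (C - {c}))) \<le> eplus (\<nu> B) (\<nu> C)"
      "covering_pair E r S T s (insert c (B - {e})) (insert e (C - {c}))"
proof -
  have finE: "finite E" using vm by (rule valuated_matroid_finite)
  note B = BC[unfolded covering_pair_def]
  obtain c where c: "c \<in> C - B" and exch:
      "eplus (\<nu> (insert c (B - {e}))) (\<nu> (insert e (C - {c}))) \<le> eplus (\<nu> B) (\<nu> C)"
    using valuated_matroid_exchange[OF vm _ _ _ _ e(1)] B by blast
  have bases: "insert c (B - {e}) \<subseteq> E" "card (insert c (B - {e})) = r"
    "insert e (C - {c}) \<subseteq> E" "card (insert e (C - {c})) = r"
    using B c e(1) card_insert_Diff_swap[of B e c] card_insert_Diff_swap[of C c e]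
      finite_subset[OF _ finE] by auto
  show thesis
  proof (cases "c \<in> T")
    case True
    then have "c \<in> T - S" using c s B by auto
    then have "nu_tilde_exchange_le E r \<nu> S T s
        (eplus (\<nu> (insert c (B - {e}))) (\<nu> (insert e (C - {c}))))"
      using bases B c e s by (intro nu_tilde_exchange_le_cover[OF finE]) auto
    then show thesis by (rule that(1)[OF nu_tilde_exchange_le_trans[OF _ exch]])
  next
    case False
    have "(S - {s}) \<inter> E \<subseteq> insert c (B - {e})" "T \<inter> E \<subseteq> insert e (C - {c})"
      "s \<in> E \<longrightarrow> s \<in> insert c (B - {e}) \<union> insert e (C - {c})"
      using B e False by auto
    then show thesis
      using that(2)[OF c False exch] bases unfolding covering_pair_def by blast
  qed
qed

lemma covering_pair_stay_or_swap:
  assumes BC: "covering_pair E r S T s B C"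
  obtains "nu_tilde_exchange_le E r \<nu> S T s (eplus (\<nu> B) (\<nu> C))"
  | e where "e \<in> B - C" "e \<notin> S - {s}" "s \<in> E \<Longrightarrow> s \<in> C \<or> s = e"
proof -
  have finE: "finite E" using vm by (rule valuated_matroid_finite)
  note B = BC[unfolded covering_pair_def]
  have finBC: "finite B" "finite C" using B finite_subset[OF _ finE] by auto
  show thesis
  proof (cases "s \<in> E \<and> s \<notin> C")
    case True
    then show thesis using that(2)[of s] B by auto
  next
    case s_C: False
    show thesis
    proof (cases "\<exists>t\<in>T - S. t \<in> E \<longrightarrow> t \<in> B")
      case True
      then obtain t where "t \<in> T - S" "t \<in> E \<longrightarrow> t \<in> B" by blast
      then show thesis using covering_pair_stay[OF finE BC] s_C that(1) by blast
    next
      case False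
      \<comment> \<open>Then \<open>|B - C| \<ge> |T - S| = |S - T|\<close>, too many for \<open>B - C \<subseteq> S - T - {s}\<close>.\<close>
      then have "T - S \<subseteq> C - B" using B by auto
      then have "card (T - S) \<le> card (B - C)"
        using card_mono[of "C - B" "T - S"] card_le_sym_Diff[of C B] finBC B by auto
      moreover have "card (S - T) = card (T - S)"
        using card_le_sym_Diff[of S T] card_le_sym_Diff[of T S] fin card_eq by auto
      moreover have "card (S - T - {s}) < card (S - T)"
        using s fin by (intro card_Diff1_less) auto
      ultimately have "\<not> B - C \<subseteq> S - T - {s}"
        using card_mono[of "S - T - {s}" "B - C"] fin by auto
      then obtain e where "e \<in> B - C" "e \<notin> S" using B s_C by auto
      then show thesis using that(2) s_C by auto
    qed
  qed
qed

lemma covering_pair_exchange_le: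
  assumes BC: "covering_pair E r S T s B C" and free: "C - T \<subseteq> B"
  shows "nu_tilde_exchange_le E r \<nu> S T s (eplus (\<nu> B) (\<nu> C))"
proof (rule covering_pair_stay_or_swap[OF BC])
  fix e assume "e \<in> B - C" "e \<notin> S - {s}" "s \<in> E \<Longrightarrow> s \<in> C \<or> s = e"
  then show ?thesis using covering_pair_swap[OF BC] free by blast
qed

text \<open>This is where the optimality of \<open>B\<close> enters: the first base of a competing pair can be
  replaced by \<open>B\<close>.\<close>

lemma covering_pair_exchange_le_optimal:
  assumes BC': "covering_pair E r S T s B' C'" and free: "C' - T \<subseteq> B"
    and B: "B \<subseteq> E" "card B = r" "S \<inter> E \<subseteq> B" "\<nu> B = nu_tilde E r \<nu> (S \<inter> E)"
    and "S \<inter> E \<subseteq> B'" and le: "eplus (\<nu> B') (\<nu> C') \<le> eplus (\<nu> B) (\<nu> C)"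
  shows "nu_tilde_exchange_le E r \<nu> S T s (eplus (\<nu> B) (\<nu> C))"
proof -
  have finE: "finite E" using vm by (rule valuated_matroid_finite)
  have "\<nu> B \<le> \<nu> B'"
    unfolding B(4) using BC' \<open>S \<inter> E \<subseteq> B'\<close> unfolding covering_pair_def
    by (intro nu_tilde_le[OF finE]) auto
  then have le': "eplus (\<nu> B) (\<nu> C') \<le> eplus (\<nu> B) (\<nu> C)" using le by (rule eplus_le_cancel)
  have "covering_pair E r S T s B C'" using BC' B s unfolding covering_pair_def by auto
  then show ?thesis using le' by (rule nu_tilde_exchange_le_trans[OF covering_pair_exchange_le[OF _ free]])
qed

lemma covering_pair_exchange_le_second_swap:
  assumes BC1: "covering_pair E r S T s B1 C1" and "s \<in> C1" "C1 - T \<subseteq> {s}"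
    and e: "e \<in> B1 - C1" "e \<notin> S" "e \<in> B"
    and B: "B \<subseteq> E" "card B = r" "S \<inter> E \<subseteq> B" "\<nu> B = nu_tilde E r \<nu> (S \<inter> E)"
    and le: "eplus (\<nu> B1) (\<nu> C1) \<le> eplus (\<nu> B) (\<nu> C)"
  shows "nu_tilde_exchange_le E r \<nu> S T s (eplus (\<nu> B) (\<nu> C))"
proof (rule covering_pair_swap[OF BC1 e(1)])
  show "e \<notin> S - {s}" using e(2) by blast
  show "s \<in> C1 \<or> s = e" using \<open>s \<in> C1\<close> by blast
next
  assume "nu_tilde_exchange_le E r \<nu> S T s (eplus (\<nu> B1) (\<nu> C1))"
  then show ?thesis using le by (rule nu_tilde_exchange_le_trans)
next
  fix c assume c: "c \<in> C1 - B1" "c \<notin> T"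
    and le2: "eplus (\<nu> (insert c (B1 - {e}))) (\<nu> (insert e (C1 - {c})))
      \<le> eplus (\<nu> B1) (\<nu> C1)"
    and BC2: "covering_pair E r S T s (insert c (B1 - {e})) (insert e (C1 - {c}))"
  have "c = s" using c \<open>C1 - T \<subseteq> {s}\<close> by blast
  show ?thesis
  proof (rule covering_pair_exchange_le_optimal[OF BC2 _ B])
    show "insert e (C1 - {c}) - T \<subseteq> B" using \<open>C1 - T \<subseteq> {s}\<close> \<open>c = s\<close> e(3) by blast
    show "S \<inter> E \<subseteq> insert c (B1 - {e})"
      using BC2 \<open>c = s\<close> unfolding covering_pair_def by blast
    show "eplus (\<nu> (insert c (B1 - {e}))) (\<nu> (insert e (C1 - {c}))) \<le> eplus (\<nu> B) (\<nu> C)"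
      using le2 le by (rule order_trans)
  qed
qed

context
  fixes q :: 'e
  assumes q: "q \<notin> E" and S: "S \<subseteq> insert q E" "card S = r" and T: "T \<subseteq> insert q E"
begin

lemma extension_exchange_le_point_in_S:
  assumes "q \<in> S" and BC1: "covering_pair E r S T s B1 C1" and C1: "s \<in> C1" "C1 - T \<subseteq> {s}"
    and "B - {s} \<subseteq> B1"
    and B: "B \<subseteq> E" "card B = r" "S \<inter> E \<subseteq> B" "\<nu> B = nu_tilde E r \<nu> (S \<inter> E)"
    and le: "eplus (\<nu> B1) (\<nu> C1) \<le> eplus (\<nu> B) (\<nu> C)"
  shows "nu_tilde_exchange_le E r \<nu> S T s (eplus (\<nu> B) (\<nu> C))"
proof -
  have finE: "finite E" using vm by (rule valuated_matroid_finite)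
  have "B \<inter> S = S - {q}" using B(1,3) S(1) q by blast
  then have "card (B \<inter> S) = r - 1" using \<open>q \<in> S\<close> fin(1) S(2) by simp
  moreover have "r \<ge> 1" using card_gt_0_iff[of S] \<open>q \<in> S\<close> fin(1) S(2) by auto
  ultimately have "card (B - S) = 1"
    using card_Diff_subset_Int[of B S] finite_subset[OF B(1) finE] B(2) by simp
  then obtain e where e: "B - S = {e}" by (rule card_1_singletonE)
  have "e \<in> B1" "e \<notin> S" "e \<in> B" using e \<open>B - {s} \<subseteq> B1\<close> s by auto
  show ?thesis
  proof (cases "e \<in> T")
    case True
    then have "nu_tilde_exchange_le E r \<nu> S T s (eplus (\<nu> B1) (\<nu> C1))"
      using covering_pair_stay[OF finE BC1, of e] \<open>e \<in> B1\<close> \<open>e \<notin> S\<close> C1(1) by blast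
    then show ?thesis using le by (rule nu_tilde_exchange_le_trans)
  next
    case False
    then have "e \<in> B1 - C1" using \<open>e \<in> B1\<close> \<open>e \<notin> S\<close> C1(2) s by auto
    then show ?thesis
      using covering_pair_exchange_le_second_swap[OF BC1 C1 _ \<open>e \<notin> S\<close> \<open>e \<in> B\<close> B le] by blast
  qed
qed

lemma single_free_exchange_le:
  assumes BC: "covering_pair E r S T s B C"
    and B: "S \<inter> E \<subseteq> B" "\<nu> B = nu_tilde E r \<nu> (S \<inter> E)"
    and f: "C - T = {f}" "f \<notin> B"
  shows "nu_tilde_exchange_le E r \<nu> S T s (eplus (\<nu> B) (\<nu> C))"
proof -
  have finE: "finite E" using vm by (rule valuated_matroid_finite)
  note bases = BC[unfolded covering_pair_def]
  have "q \<in> T"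
  proof (rule ccontr)
    assume "q \<notin> T"
    then have "T \<subseteq> C" using T bases by blast
    then have "C = T" using card_subset_eq[OF finite_subset[OF _ finE]] bases S(2) card_eq by metis
    then show False using f by blast
  qed
  have sE: "s \<in> E" "s \<in> B" "s \<notin> C" using s \<open>q \<in> T\<close> S(1) B(1) f by auto
  define B1 C1 where "B1 = insert f (B - {s})" and "C1 = insert s (C - {f})"
  consider (moved) "covering_pair E r S T s B1 C1" "eplus (\<nu> B1) (\<nu> C1) \<le> eplus (\<nu> B) (\<nu> C)"
    | (exchanged) "nu_tilde_exchange_le E r \<nu> S T s (eplus (\<nu> B) (\<nu> C))"
  proof (rule covering_pair_swap[OF BC, of s])
    fix c assume "c \<in> C - B" "c \<notin> T"
      "eplus (\<nu> (insert c (B - {s}))) (\<nu> (insert s (C - {c}))) \<le> eplus (\<nu> B) (\<nu> C)"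
      "covering_pair E r S T s (insert c (B - {s})) (insert s (C - {c}))"
    moreover have "c = f" using \<open>c \<in> C - B\<close> \<open>c \<notin> T\<close> f by blast
    ultimately show thesis using that(1) unfolding B1_def C1_def by blast
  qed (use sE in auto)
  then show ?thesis
  proof cases
    case exchanged
    then show ?thesis .
  next
    case moved
    have C1: "s \<in> C1" "C1 - T \<subseteq> {s}" using f unfolding C1_def by auto
    show ?thesis
    proof (cases "q \<in> S")
      case False
      then have "nu_tilde_exchange_le E r \<nu> S T s (eplus (\<nu> B1) (\<nu> C1))"
        using covering_pair_stay[OF finE moved(1), of q] \<open>q \<in> T\<close> q C1(1) by blast
      then show ?thesis using moved(2) by (rule nu_tilde_exchange_le_trans)
    next
      case True
      have "B - {s} \<subseteq> B1" unfolding B1_def by blast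
      with True moved(1) C1 show ?thesis
        using bases B moved(2) by (intro extension_exchange_le_point_in_S) auto
    qed
  qed
qed

lemma extension_exchange_le:
  "nu_tilde_exchange_le E r \<nu> S T s
           (eplus (nu_tilde E r \<nu> (S \<inter> E)) (nu_tilde E r \<nu> (T \<inter> E)))"
proof -
  have finE: "finite E" using vm by (rule valuated_matroid_finite)
  have rE: "r \<le> card E" using vm by (rule valuated_matroid_rank_le)
  have "card (S \<inter> E) \<le> r" "card (T \<inter> E) \<le> r"
    using S(2) card_eq card_mono[OF fin(1), of "S \<inter> E"] card_mono[OF fin(2), of "T \<inter> E"] by auto
  then obtain B C where
    B: "B \<subseteq> E" "card B = r" "S \<inter> E \<subseteq> B" "\<nu> B = nu_tilde E r \<nu> (S \<inter> E)" and
    C: "C \<subseteq> E" "card C = r" "T \<inter> E \<subseteq> C" "\<nu> C = nu_tilde E r \<nu> (T \<inter> E)"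
    using nu_tilde_attained[OF finE Int_lower2 _ rE] by metis
  have BC: "covering_pair E r S T s B C" using B C s unfolding covering_pair_def by auto
  have "nu_tilde_exchange_le E r \<nu> S T s (eplus (\<nu> B) (\<nu> C))"
  proof (cases "C - T \<subseteq> B")
    case True
    then show ?thesis by (rule covering_pair_exchange_le[OF BC])
  next
    case False
    then obtain f where f: "f \<in> C - B" "f \<notin> T" by blast
    have "T - {q} \<subseteq> C \<inter> T" using T C(3) by blast
    then have "card (C \<inter> T) \<ge> r - 1"
      using card_mono[OF _ \<open>T - {q} \<subseteq> C \<inter> T\<close>] diff_card_le_card_Diff[of "{q}" T]
        finite_subset[OF C(1) finE] S(2) card_eq by auto
    then have "card (C - T) \<le> 1"
      using card_Diff_subset_Int[of C T] finite_subset[OF C(1) finE] C(2) by simp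
    then have "C - T = {f}"
      using f card_le_Suc0_iff_eq[of "C - T"] finite_subset[OF C(1) finE] by auto
    then show ?thesis using single_free_exchange_le[OF BC B(3,4)] f by blast
  qed
  then show ?thesis using B(4) C(4) by simp
qed

end

end

lemma valuated_matroid_extend_one:
  fixes \<nu> :: "'e set \<Rightarrow> 'a::linordered_ab_group_add ext"
  assumes vm: "valuated_matroid E r \<nu>" and q: "q \<notin> E"
  shows "valuated_matroid (insert q E) r (\<lambda>X. nu_tilde E r \<nu> (X \<inter> E))"
  unfolding valuated_matroid_def
proof (intro conjI allI impI ballI)
  have finE: "finite E" using vm by (rule valuated_matroid_finite)
  then show "finite (insert q E)" by simp
  obtain B where B: "B \<subseteq> E" "card B = r" "\<nu> B \<noteq> Infty"
    using vm unfolding valuated_matroid_def by blast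
  have "nu_tilde E r \<nu> (B \<inter> E) \<noteq> Infty"
    using nu_tilde_le[OF finE B(1,2), of "B \<inter> E" \<nu>] B(3) by (cases "\<nu> B") auto
  then show "\<exists>B\<subseteq>insert q E. card B = r \<and> nu_tilde E r \<nu> (B \<inter> E) \<noteq> Infty"
    using B by blast
next
  fix S T s
  assume ST: "S \<subseteq> insert q E \<and> card S = r \<and> T \<subseteq> insert q E \<and> card T = r" and s: "s \<in> S - T"
  have "finite S" "finite T"
    using ST valuated_matroid_finite[OF vm] finite_subset by (metis finite_insert)+
  then show "\<exists>t\<in>T - S. eplus (nu_tilde E r \<nu> (insert t (S - {s}) \<inter> E))
      (nu_tilde E r \<nu> (insert s (T - {t}) \<inter> E))
    \<le> eplus (nu_tilde E r \<nu> (S \<inter> E)) (nu_tilde E r \<nu> (T \<inter> E))"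
    using extension_exchange_le[OF vm s _ _ _ q] ST unfolding nu_tilde_exchange_le_def by auto
qed

lemma valuated_matroid_nu_tilde_insert:
  assumes vm: "valuated_matroid E r \<nu>"
    and vmX: "valuated_matroid X r (\<lambda>A. nu_tilde E r \<nu> (A \<inter> E))" and "E \<subseteq> X" "q \<notin> X"
  shows "valuated_matroid (insert q X) r (\<lambda>A. nu_tilde E r \<nu> (A \<inter> E))"
proof (rule valuated_matroid_cong[OF valuated_matroid_extend_one[OF vmX \<open>q \<notin> X\<close>]])
  fix A assume A: "A \<subseteq> insert q X" "card A = r"
  have finX: "finite X" using vmX by (rule valuated_matroid_finite)
  have "card (A \<inter> X) \<le> r"
    using A finX card_mono[of A "A \<inter> X"] finite_subset[OF A(1)] by auto
  then have "nu_tilde X r (\<lambda>A. nu_tilde E r \<nu> (A \<inter> E)) (A \<inter> X) = nu_tilde E r \<nu> (A \<inter> X \<inter> E)"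
    using valuated_matroid_rank_le[OF vm] \<open>E \<subseteq> X\<close> by (intro nu_tilde_of_extension[OF finX]) auto
  also have "A \<inter> X \<inter> E = A \<inter> E" using \<open>E \<subseteq> X\<close> by blast
  finally show "nu_tilde X r (\<lambda>A. nu_tilde E r \<nu> (A \<inter> E)) (A \<inter> X) = nu_tilde E r \<nu> (A \<inter> E)" .
qed

theorem proposition1p1:
  fixes E Q :: "'e set" and r :: nat
    and \<nu> :: "'e set \<Rightarrow> 'a::linordered_ab_group_add ext"
  assumes "valuated_matroid E r \<nu>"
    and "finite Q" and "Q \<inter> E = {}"
  shows "valuated_matroid (Q \<union> E) r (\<lambda>S. nu_tilde E r \<nu> (S \<inter> E))"
  using assms(2)
proof (induction Q rule: finite_induct)
  case empty
  have "finite E" using assms(1) by (rule valuated_matroid_finite)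
  then show ?case
    using valuated_matroid_cong[OF assms(1)] nu_tilde_base[of E _ r \<nu>] by (simp add: Int_absorb2)
next
  case (insert q Q)
  show ?case
  proof (cases "q \<in> E")
    case True
    then show ?thesis using insert.IH by (simp add: insert_absorb)
  next
    case False
    then show ?thesis
      using valuated_matroid_nu_tilde_insert[OF assms(1) insert.IH, of q] insert(2) by simp
  qed
qed

end
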